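(* Let $B$ be an object of $\mathsf{SquaMS}$, $p\ge0$, $n_0,\dots,n_{p-1},n'_0,\dots,n'_{p-1}\in N$ and $(r,s),(t,u)\in\{0,1\}^2$. Then the distance in $N^p\otimes B$ between $n_0\otimes\cdots\otimes n_{p-1}\otimes S_B((r,s))$ and $n'_0\otimes\cdots\otimes n'_{p-1}\otimes S_B((t,u))$ equals $\frac{h+v}{3^p}$, where $(h,v)$ are $3^p$ times the absolute differences of the $x$- and $y$-coordinates of the plane points $\sum_{k<p}n_k/3^{k+1}+(r,s)/3^p$ and $\sum_{k<p}n'_k/3^{k+1}+(t,u)/3^p$. In particular, writing $n_k=(i_k,j_k)$, $n'_k=(k_k,l_k)$, $$d_{N^p\otimes B}\big((i_0,j_0)\otimes\cdots\otimes(i_{p-1},j_{p-1})\otimes S_B((0,0)),(k_0,l_0)\otimes\cdots\otimes(k_{p-1},l_{p-1})\otimes S_B((0,0))\big)=\Big|\sum_{m=0}^{p-1}\frac{i_m-k_m}{3^{m+1}}\Big|+\Big|\sum_{m=0}^{p-1}\frac{j_m-l_m}{3^{m+1}}\Big|.$$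
   Context: Let $M_0=\{(r,s)\in[0,1]^2: r\in\{0,1\}\text{ or } s\in\{0,1\}\}$. A square metric space is a pair $(X,S_X)$ with $X$ a metric space with all distances at most $2$ and $S_X\colon M_0\to X$ injective such that (sq1) for $i\in\{0,1\}$, $r,s\in[0,1]$: $d_X(S_X(i,r),S_X(i,s))=|s-r|$ and $d_X(S_X(r,i),S_X(s,i))=|s-r|$; (sq2) $d_X(S_X(r,s),S_X(t,u))\ge|r-t|+|s-u|$; $\mathsf{SquaMS}$ is the category of these with short $S$-preserving maps. Let $N=\{0,1,2\}^2$, also viewed as points of $\mathbb{R}^2$. For $X$ in $\mathsf{SquaMS}$, $N\otimes X=(N\times X)/\!\sim$, where $\sim$ is generated by $(m,S_X(p))\sim(n,S_X(q))$ whenever $m,n\in N$ differ by exactly $1$ in exactly one coordinate and $(m+p)/3=(n+q)/3$; $n\otimes x$ is the class of $(n,x)$; the metric is the quotient of $d((a,u),(b,v))=\frac13 d_X(u,v)$ if $a=b$, $2$ otherwise (infimum over finite chains, $\sim$-related consecutive pairs counting $0$); $S_{N\otimes X}(q)=n\otimes S_X(3q-n)$ for $n\in N$ with $q\in(n+[0,1]^2)/3$. $N^0\otimes B=B$, $N^{p+1}\otimes B=N\otimes(N^p\otimes B)$, with elements written $n_0\otimes\cdots\otimes n_{p-1}\otimes b$. *)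

theory Defs
  imports "HOL-Analysis.Analysis"
begin

text \<open>A (candidate) square metric space is a triple (carrier, distance, S).\<close>
type_synonym 'a sqms = "'a set \<times> ('a \<Rightarrow> 'a \<Rightarrow> real) \<times> (real \<times> real \<Rightarrow> 'a)"

definition NN :: "(nat \<times> nat) set" where
  "NN = {0..2} \<times> {0..2}"

definition M0 :: "(real \<times> real) set" where
  "M0 = {(r, s). 0 \<le> r \<and> r \<le> 1 \<and> 0 \<le> s \<and> s \<le> 1 \<and> (r \<in> {0, 1} \<or> s \<in> {0, 1})}"

definition square_ms :: "'a set \<Rightarrow> ('a \<Rightarrow> 'a \<Rightarrow> real) \<Rightarrow> (real \<times> real \<Rightarrow> 'a) \<Rightarrow> bool" where
  "square_ms X d S \<longleftrightarrow>
     Metric_space X d \<and> (\<forall>x\<in>X. \<forall>y\<in>X. d x y \<le> 2) \<and>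
     S ` M0 \<subseteq> X \<and> inj_on S M0 \<and>
     (\<forall>i\<in>{0, 1}. \<forall>r\<in>{0..1}. \<forall>s\<in>{0..1}.
        d (S (i, r)) (S (i, s)) = \<bar>s - r\<bar> \<and> d (S (r, i)) (S (s, i)) = \<bar>s - r\<bar>) \<and>
     (\<forall>p\<in>M0. \<forall>q\<in>M0. d (S p) (S q) \<ge> \<bar>fst p - fst q\<bar> + \<bar>snd p - snd q\<bar>)"

definition adjacent :: "nat \<times> nat \<Rightarrow> nat \<times> nat \<Rightarrow> bool" where
  "adjacent m n \<longleftrightarrow>
     (fst m = fst n \<and> \<bar>int (snd m) - int (snd n)\<bar> = 1) \<or>
     (snd m = snd n \<and> \<bar>int (fst m) - int (fst n)\<bar> = 1)"

definition gen_rel :: "'a set \<Rightarrow> (real \<times> real \<Rightarrow> 'a) \<Rightarrow> (((nat \<times> nat) \<times> 'a) \<times> ((nat \<times> nat) \<times> 'a)) set" where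
  "gen_rel X S = {((m, S p), (n, S q)) | m n p q.
      m \<in> NN \<and> n \<in> NN \<and> adjacent m n \<and> p \<in> M0 \<and> q \<in> M0 \<and>
      (real (fst m) + fst p) / 3 = (real (fst n) + fst q) / 3 \<and>
      (real (snd m) + snd p) / 3 = (real (snd n) + snd q) / 3}"

definition sim_rel :: "'a set \<Rightarrow> (real \<times> real \<Rightarrow> 'a) \<Rightarrow> (((nat \<times> nat) \<times> 'a) \<times> ((nat \<times> nat) \<times> 'a)) set" where
  "sim_rel X S = (gen_rel X S \<union> (gen_rel X S)\<inverse>)\<^sup>* \<inter> ((NN \<times> X) \<times> (NN \<times> X))"

definition pre_dist :: "('a \<Rightarrow> 'a \<Rightarrow> real) \<Rightarrow> (nat \<times> nat) \<times> 'a \<Rightarrow> (nat \<times> nat) \<times> 'a \<Rightarrow> real" where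
  "pre_dist d z w = (if fst z = fst w then d (snd z) (snd w) / 3 else 2)"

definition step_cost :: "'a sqms \<Rightarrow> (nat \<times> nat) \<times> 'a \<Rightarrow> (nat \<times> nat) \<times> 'a \<Rightarrow> real" where
  "step_cost T z w = (case T of (X, d, S) \<Rightarrow>
      (if (z, w) \<in> sim_rel X S then 0 else pre_dist d z w))"

definition chain_dist :: "'a sqms \<Rightarrow> (nat \<times> nat) \<times> 'a \<Rightarrow> (nat \<times> nat) \<times> 'a \<Rightarrow> real" where
  "chain_dist T z w = (case T of (X, d, S) \<Rightarrow>
     Inf {(\<Sum>i<length zs - 1. step_cost T (zs ! i) (zs ! Suc i)) | zs.
            zs \<noteq> [] \<and> hd zs = z \<and> last zs = w \<and> set zs \<subseteq> NN \<times> X})"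

text \<open>Encoding of the iterated quotients: an element of N^p \<otimes> B is represented
  as a set of pairs (list of p indices, element of B), namely the set of all
  representatives n_0 \<otimes> ... \<otimes> n_{p-1} \<otimes> b of that element.
  Classes of N \<times> X (X encoded in this way) are encoded by prefixing indices.\<close>
type_synonym 'b enc = "((nat \<times> nat) list \<times> 'b) set"

definition emb :: "nat \<times> nat \<Rightarrow> 'b enc \<Rightarrow> 'b enc" where
  "emb m c = (\<lambda>(l, b). (m # l, b)) ` c"

definition encode_cls :: "((nat \<times> nat) \<times> 'b enc) set \<Rightarrow> 'b enc" where
  "encode_cls K = (\<Union>(m, c)\<in>K. emb m c)"

definition ten_elt :: "'b enc sqms \<Rightarrow> nat \<times> nat \<Rightarrow> 'b enc \<Rightarrow> 'b enc" where
  "ten_elt T n x = (case T of (X, d, S) \<Rightarrow> encode_cls (sim_rel X S `` {(n, x)}))"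

definition cell :: "nat \<times> nat \<Rightarrow> real \<times> real \<Rightarrow> bool" where
  "cell n q \<longleftrightarrow> real (fst n) / 3 \<le> fst q \<and> fst q \<le> (real (fst n) + 1) / 3 \<and>
                real (snd n) / 3 \<le> snd q \<and> snd q \<le> (real (snd n) + 1) / 3"

definition tensor :: "'b enc sqms \<Rightarrow> 'b enc sqms" where
  "tensor T = (case T of (X, d, S) \<Rightarrow>
     ({ten_elt T n x | n x. n \<in> NN \<and> x \<in> X},
      (\<lambda>a b. Inf {chain_dist T z w | z w. z \<in> NN \<times> X \<and> w \<in> NN \<times> X \<and>
                     ten_elt T (fst z) (snd z) = a \<and> ten_elt T (fst w) (snd w) = b}),
      (\<lambda>q. let n = (SOME n. n \<in> NN \<and> cell n q)
           in ten_elt T n (S (3 * fst q - real (fst n), 3 * snd q - real (snd n))))))"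

definition base_enc :: "'b sqms \<Rightarrow> 'b enc sqms" where
  "base_enc B = (case B of (X, d, S) \<Rightarrow>
     ((\<lambda>b. {([], b)}) ` X,
      (\<lambda>a c. d (snd (the_elem a)) (snd (the_elem c))),
      (\<lambda>q. {([], S q)})))"

fun tensor_pow :: "nat \<Rightarrow> 'b sqms \<Rightarrow> 'b enc sqms" where
  "tensor_pow 0 B = base_enc B"
| "tensor_pow (Suc p) B = tensor (tensor_pow p B)"

fun tens_elem :: "'b sqms \<Rightarrow> (nat \<times> nat) list \<Rightarrow> 'b \<Rightarrow> 'b enc" where
  "tens_elem B [] b = {([], b)}"
| "tens_elem B (n # ns) b = ten_elt (tensor_pow (length ns) B) n (tens_elem B ns b)"

definition tdist :: "nat \<Rightarrow> 'b sqms \<Rightarrow> 'b enc \<Rightarrow> 'b enc \<Rightarrow> real" where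
  "tdist p B = fst (snd (tensor_pow p B))"

end

theory Submission
  imports Defs
begin

(*
  An element n_0 \<otimes> ... \<otimes> n_(p-1) \<otimes> S_B(a) of N^p \<otimes> B with a \<in> M_0 represents the point
  \<Sum> n_k / 3^(k+1) + a / 3^p of the unit square; for corners a its distances are exactly the
  l1 distances of these points.

  Lower bound, by induction on p: along a chain in N \<times> X, a \<sim>-step joins two representatives of
  the same point, a step inside one cell costs d/3, which by induction dominates one third of the
  l1 distance of the points, and a step between different cells costs 2, the l1 diameter of the
  unit square.

  Upper bound, by induction on p and then on the distance between the cells: leave the cell of
  the first point through the grid point of the edge shared with the neighbouring cell closer to
  the target, on a monotone path, so that no length is lost. Rescaled grid points are grid points
  one level down, hence again corner-labelled; at level 0 the triangle inequality through a corner
  and (sq1) give the l1 distance.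
*)

section \<open>Chains in \<open>N \<times> X\<close>\<close>

definition chain_cost :: "'a sqms \<Rightarrow> ((nat \<times> nat) \<times> 'a) list \<Rightarrow> real" where
  "chain_cost T zs = (\<Sum>i<length zs - 1. step_cost T (zs ! i) (zs ! Suc i))"

lemma chain_cost_single [simp]: "chain_cost T [z] = 0"
  by (simp add: chain_cost_def)

lemma chain_cost_Cons_Cons [simp]:
  "chain_cost T (z # w # zs) = step_cost T z w + chain_cost T (w # zs)"
  unfolding chain_cost_def by (simp add: sum.lessThan_Suc_shift del: sum.lessThan_Suc)

lemma chain_cost_append:
  assumes "zs \<noteq> []" "ws \<noteq> []" "last zs = hd ws"
  shows "chain_cost T (zs @ tl ws) = chain_cost T zs + chain_cost T ws"
  using assms
proof (induction zs rule: induct_list012)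
  case (2 z)
  then show ?case by (cases ws) auto
next
  case (3 z w zs)
  then show ?case by simp
qed simp

definition chain_costs :: "'a sqms \<Rightarrow> (nat \<times> nat) \<times> 'a \<Rightarrow> (nat \<times> nat) \<times> 'a \<Rightarrow> real set" where
  "chain_costs T z w =
     {chain_cost T zs | zs. zs \<noteq> [] \<and> hd zs = z \<and> last zs = w \<and> set zs \<subseteq> NN \<times> fst T}"

lemma chain_cost_in_chain_costs:
  "zs \<noteq> [] \<Longrightarrow> set zs \<subseteq> NN \<times> X \<Longrightarrow>
     chain_cost (X, d, S) zs \<in> chain_costs (X, d, S) (hd zs) (last zs)"
  unfolding chain_costs_def by auto

lemma chain_dist_eq_Inf: "chain_dist (X, d, S) z w = Inf (chain_costs (X, d, S) z w)"
  unfolding chain_dist_def chain_costs_def chain_cost_def by simp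

lemma chain_costs_trans:
  assumes "a \<in> chain_costs T z y" "b \<in> chain_costs T y w"
  shows "a + b \<in> chain_costs T z w"
proof -
  obtain zs ws where zs: "zs \<noteq> []" "hd zs = z" "last zs = y" "set zs \<subseteq> NN \<times> fst T" "a = chain_cost T zs"
    and ws: "ws \<noteq> []" "hd ws = y" "last ws = w" "set ws \<subseteq> NN \<times> fst T" "b = chain_cost T ws"
    using assms unfolding chain_costs_def by auto
  have "last (zs @ tl ws) = w"
    using zs ws by (cases ws; cases "tl ws") auto
  moreover have "set (zs @ tl ws) \<subseteq> NN \<times> fst T"
    using zs ws by (cases ws) auto
  moreover have "chain_cost T (zs @ tl ws) = a + b"
    using chain_cost_append zs ws by metis
  ultimately show ?thesis
    using zs unfolding chain_costs_def by (intro CollectI exI[of _ "zs @ tl ws"]) auto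
qed

lemma sim_rel_sym:
  assumes "(z, w) \<in> sim_rel X S"
  shows "(w, z) \<in> sim_rel X S"
proof -
  let ?G = "gen_rel X S \<union> (gen_rel X S)\<inverse>"
  have "(w, z) \<in> (?G\<inverse>)\<^sup>*"
    using assms unfolding sim_rel_def by (auto intro: rtrancl_converseI)
  moreover have "?G\<inverse> = ?G" by auto
  ultimately show ?thesis using assms unfolding sim_rel_def by auto
qed

lemma sim_rel_trans: "(z, y) \<in> sim_rel X S \<Longrightarrow> (y, w) \<in> sim_rel X S \<Longrightarrow> (z, w) \<in> sim_rel X S"
  unfolding sim_rel_def by (auto intro: rtrancl_trans)

lemma sim_rel_refl: "z \<in> NN \<times> X \<Longrightarrow> (z, z) \<in> sim_rel X S"
  unfolding sim_rel_def by auto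

lemma sim_rel_dom: "(z, w) \<in> sim_rel X S \<Longrightarrow> z \<in> NN \<times> X \<and> w \<in> NN \<times> X"
  unfolding sim_rel_def by auto

locale nonneg_space =
  fixes X :: "'a set" and d :: "'a \<Rightarrow> 'a \<Rightarrow> real" and S :: "real \<times> real \<Rightarrow> 'a"
  assumes nonneg: "x \<in> X \<Longrightarrow> y \<in> X \<Longrightarrow> 0 \<le> d x y"
begin

lemma chain_cost_nonneg:
  assumes "set zs \<subseteq> NN \<times> X"
  shows "0 \<le> chain_cost (X, d, S) zs"
  unfolding chain_cost_def
proof (rule sum_nonneg)
  fix i assume "i \<in> {..<length zs - 1}"
  then have "zs ! i \<in> set zs" "zs ! Suc i \<in> set zs" by auto
  then have "zs ! i \<in> NN \<times> X" "zs ! Suc i \<in> NN \<times> X" using assms by blast+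
  then show "0 \<le> step_cost (X, d, S) (zs ! i) (zs ! Suc i)"
    by (auto simp: step_cost_def pre_dist_def intro: nonneg)
qed

lemma chain_dist_le: "c \<in> chain_costs (X, d, S) z w \<Longrightarrow> chain_dist (X, d, S) z w \<le> c"
  unfolding chain_dist_eq_Inf
  by (rule cInf_lower) (auto simp: bdd_below_def chain_costs_def intro: chain_cost_nonneg)

lemma chain_dist_greatest:
  assumes "z \<in> NN \<times> X" "w \<in> NN \<times> X" "\<And>c. c \<in> chain_costs (X, d, S) z w \<Longrightarrow> a \<le> c"
  shows "a \<le> chain_dist (X, d, S) z w"
  unfolding chain_dist_eq_Inf
  using assms chain_cost_in_chain_costs[of "[z, w]" X d S] by (intro cInf_greatest) auto

lemma chain_dist_le_step_cost:
  "z \<in> NN \<times> X \<Longrightarrow> w \<in> NN \<times> X \<Longrightarrow> chain_dist (X, d, S) z w \<le> step_cost (X, d, S) z w"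
  using chain_dist_le chain_cost_in_chain_costs[of "[z, w]" X d S] by fastforce

lemma chain_dist_nonneg: "z \<in> NN \<times> X \<Longrightarrow> w \<in> NN \<times> X \<Longrightarrow> 0 \<le> chain_dist (X, d, S) z w"
  by (rule chain_dist_greatest) (auto simp: chain_costs_def intro: chain_cost_nonneg)

lemma chain_dist_refl: "z \<in> NN \<times> X \<Longrightarrow> chain_dist (X, d, S) z z = 0"
  using chain_dist_le[of 0] chain_cost_in_chain_costs[of "[z]" X d S] chain_dist_nonneg[of z z]
  by fastforce

lemma chain_dist_triangle:
  assumes "z \<in> NN \<times> X" "y \<in> NN \<times> X" "w \<in> NN \<times> X"
  shows "chain_dist (X, d, S) z w \<le> chain_dist (X, d, S) z y + chain_dist (X, d, S) y w"
proof -
  have "chain_dist (X, d, S) z w - b \<le> chain_dist (X, d, S) z y"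
    if b: "b \<in> chain_costs (X, d, S) y w" for b
    using assms chain_dist_le[OF chain_costs_trans[OF _ b]]
    by (intro chain_dist_greatest) (auto simp: algebra_simps)
  then have "chain_dist (X, d, S) z w - chain_dist (X, d, S) z y \<le> chain_dist (X, d, S) y w"
    using assms by (intro chain_dist_greatest) (auto simp: algebra_simps)
  then show ?thesis by simp
qed

lemma chain_dist_same_cell:
  assumes "n \<in> NN" "x \<in> X" "y \<in> X"
  shows "chain_dist (X, d, S) (n, x) (n, y) \<le> d x y / 3"
  using chain_dist_le_step_cost[of "(n, x)" "(n, y)"] assms nonneg[of x y]
  by (auto simp: step_cost_def pre_dist_def split: if_splits)

lemma chain_dist_sim_cong:
  assumes "(z, z') \<in> sim_rel X S" "(w, w') \<in> sim_rel X S"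
  shows "chain_dist (X, d, S) z w = chain_dist (X, d, S) z' w'"
proof -
  have zero: "chain_dist (X, d, S) a b = 0" if "(a, b) \<in> sim_rel X S" for a b
    using chain_dist_le_step_cost[of a b] chain_dist_nonneg[of a b] sim_rel_dom[OF that] that
    by (simp add: step_cost_def)
  have dom: "z \<in> NN \<times> X" "z' \<in> NN \<times> X" "w \<in> NN \<times> X" "w' \<in> NN \<times> X"
    using assms sim_rel_dom by blast+
  have "chain_dist (X, d, S) z w \<le> chain_dist (X, d, S) z' w'"
    using chain_dist_triangle[of z z' w'] chain_dist_triangle[of z w' w] dom
      zero[OF assms(1)] zero[OF sim_rel_sym[OF assms(2)]] by linarith
  moreover have "chain_dist (X, d, S) z' w' \<le> chain_dist (X, d, S) z w"
    using chain_dist_triangle[of z' z w] chain_dist_triangle[of z' w w'] dom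
      zero[OF sim_rel_sym[OF assms(1)]] zero[OF assms(2)] by linarith
  ultimately show ?thesis by simp
qed

end

section \<open>Cells of the unit square\<close>

definition unit_sq :: "(real \<times> real) set" where
  "unit_sq = {0..1} \<times> {0..1}"

definition cell_map :: "nat \<times> nat \<Rightarrow> real \<times> real \<Rightarrow> real \<times> real" where
  "cell_map n g = ((real (fst n) + fst g) / 3, (real (snd n) + snd g) / 3)"

definition cell_coords :: "nat \<times> nat \<Rightarrow> real \<times> real \<Rightarrow> real \<times> real" where
  "cell_coords n q = (3 * fst q - real (fst n), 3 * snd q - real (snd n))"

lemma cell_map_cell_coords [simp]: "cell_map n (cell_coords n q) = q"
  by (simp add: cell_map_def cell_coords_def)

lemma M0_subset_unit_sq: "M0 \<subseteq> unit_sq"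
  unfolding M0_def unit_sq_def by auto

lemma cell_map_unit_sq: "n \<in> NN \<Longrightarrow> g \<in> unit_sq \<Longrightarrow> cell_map n g \<in> unit_sq"
  unfolding NN_def unit_sq_def cell_map_def by auto

lemma third_exists:
  fixes a :: real
  assumes "0 \<le> a" "a \<le> 1"
  shows "\<exists>i::nat. i \<le> 2 \<and> real i / 3 \<le> a \<and> a \<le> (real i + 1) / 3"
proof -
  consider "a \<le> 1 / 3" | "1 / 3 \<le> a" "a \<le> 2 / 3" | "2 / 3 \<le> a" by linarith
  then show ?thesis
  proof cases
    case 1 then show ?thesis using assms by (intro exI[of _ 0]) auto
  next
    case 2 then show ?thesis by (intro exI[of _ 1]) auto
  next
    case 3 then show ?thesis using assms by (intro exI[of _ 2]) auto
  qed
qed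

lemma cell_exists:
  assumes "g \<in> unit_sq"
  shows "\<exists>n\<in>NN. cell n g"
proof -
  obtain i j :: nat where "i \<le> 2" "real i / 3 \<le> fst g" "fst g \<le> (real i + 1) / 3"
    and "j \<le> 2" "real j / 3 \<le> snd g" "snd g \<le> (real j + 1) / 3"
    using third_exists[of "fst g"] third_exists[of "snd g"] assms unfolding unit_sq_def by auto
  then have "(i, j) \<in> NN \<and> cell (i, j) g" unfolding NN_def cell_def by auto
  then show ?thesis by blast
qed

lemma cell_coords_M0:
  assumes "q \<in> M0" "n \<in> NN" "cell n q"
  shows "cell_coords n q \<in> M0"
  using assms unfolding M0_def NN_def cell_def cell_coords_def by auto

lemma gen_rel_cell_map:
  "(z, w) \<in> gen_rel X S \<Longrightarrow>
     \<exists>q\<in>M0. \<exists>q'\<in>M0. snd z = S q \<and> snd w = S q' \<and> cell_map (fst z) q = cell_map (fst w) q'"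
  unfolding gen_rel_def cell_map_def by fastforce

lemma gen_relI:
  "m \<in> NN \<Longrightarrow> n \<in> NN \<Longrightarrow> adjacent m n \<Longrightarrow> q \<in> M0 \<Longrightarrow> q' \<in> M0 \<Longrightarrow>
     cell_map m q = cell_map n q' \<Longrightarrow> ((m, S q), (n, S q')) \<in> gen_rel X S"
  unfolding gen_rel_def cell_map_def by blast

lemma sim_rel_cases:
  assumes inj: "inj_on S M0" and zw: "(z, w) \<in> sim_rel X S"
  shows "z = w \<or>
    (\<exists>q\<in>M0. \<exists>q'\<in>M0. snd z = S q \<and> snd w = S q' \<and> cell_map (fst z) q = cell_map (fst w) q')"
proof -
  have glued: "\<exists>q\<in>M0. \<exists>q'\<in>M0. snd y = S q \<and> snd w = S q' \<and> cell_map (fst y) q = cell_map (fst w) q'"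
    if "(y, w) \<in> gen_rel X S \<union> (gen_rel X S)\<inverse>" for y w
    using that gen_rel_cell_map[of y w] gen_rel_cell_map[of w y] by fastforce
  have "(z, w) \<in> (gen_rel X S \<union> (gen_rel X S)\<inverse>)\<^sup>*"
    using zw unfolding sim_rel_def by auto
  then show ?thesis
  proof (induction rule: rtrancl_induct)
    case (step y w)
    obtain p p' where p: "p \<in> M0" "p' \<in> M0" "snd y = S p" "snd w = S p'"
      "cell_map (fst y) p = cell_map (fst w) p'"
      using glued[OF step.hyps(2)] by blast
    from step.IH show ?case
    proof
      assume "z = y"
      then show ?thesis using p by blast
    next
      assume "\<exists>q\<in>M0. \<exists>q'\<in>M0. snd z = S q \<and> snd y = S q' \<and> cell_map (fst z) q = cell_map (fst y) q'"
      then obtain q q' where q: "q \<in> M0" "q' \<in> M0" "snd z = S q" "snd y = S q'"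
        "cell_map (fst z) q = cell_map (fst y) q'" by blast
      have "q' = p" using inj_onD[OF inj] p q by metis
      then show ?thesis using p q by auto
    qed
  qed simp
qed

section \<open>The tensor construction preserves the invariant\<close>

lemma mem_ten_elt:
  "a \<in> ten_elt (X, d, S) n x \<longleftrightarrow>
     (\<exists>m y l b. ((n, x), (m, y)) \<in> sim_rel X S \<and> (l, b) \<in> y \<and> a = (m # l, b))"
  unfolding ten_elt_def encode_cls_def emb_def by fastforce

lemma tensor_carrier: "fst (tensor (X, d, S)) = {ten_elt (X, d, S) n x | n x. n \<in> NN \<and> x \<in> X}"
  unfolding tensor_def by simp

lemma tensor_dist:
  "fst (snd (tensor (X, d, S))) a b =
     Inf {chain_dist (X, d, S) z w | z w. z \<in> NN \<times> X \<and> w \<in> NN \<times> X \<and>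
       ten_elt (X, d, S) (fst z) (snd z) = a \<and> ten_elt (X, d, S) (fst w) (snd w) = b}"
  unfolding tensor_def by simp

lemma tensor_square:
  "snd (snd (tensor (X, d, S))) q =
     (let n = SOME n. n \<in> NN \<and> cell n q in ten_elt (X, d, S) n (S (cell_coords n q)))"
  unfolding tensor_def cell_coords_def by simp

text \<open>An element is the set of all its
  representatives, so distinct elements are disjoint.\<close>
locale valid_enc = nonneg_space X d S
  for X :: "'b enc set" and d and S +
  assumes nonempty: "x \<in> X \<Longrightarrow> x \<noteq> {}"
    and disjoint: "x \<in> X \<Longrightarrow> y \<in> X \<Longrightarrow> x \<inter> y \<noteq> {} \<Longrightarrow> x = y"
    and zero: "x \<in> X \<Longrightarrow> d x x = 0"
    and triangle: "x \<in> X \<Longrightarrow> y \<in> X \<Longrightarrow> z \<in> X \<Longrightarrow> d x z \<le> d x y + d y z"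
    and S_in: "q \<in> M0 \<Longrightarrow> S q \<in> X"
    and S_inj: "inj_on S M0"
begin

lemma ten_elt_nonempty:
  assumes "n \<in> NN" "x \<in> X"
  shows "ten_elt (X, d, S) n x \<noteq> {}"
proof -
  obtain l b where "(l, b) \<in> x" using nonempty[OF assms(2)] by auto
  then have "(n # l, b) \<in> ten_elt (X, d, S) n x"
    using sim_rel_refl[of "(n, x)"] assms unfolding mem_ten_elt by blast
  then show ?thesis by blast
qed

lemma sim_rel_if_ten_elt_meet:
  assumes "a \<in> ten_elt (X, d, S) n x" "a \<in> ten_elt (X, d, S) n' x'"
  shows "((n, x), (n', x')) \<in> sim_rel X S"
proof -
  obtain m y l b where 1: "((n, x), (m, y)) \<in> sim_rel X S" "(l, b) \<in> y" "a = (m # l, b)"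
    using assms(1) unfolding mem_ten_elt by blast
  obtain m' y' l' b' where 2: "((n', x'), (m', y')) \<in> sim_rel X S" "(l', b') \<in> y'" "a = (m' # l', b')"
    using assms(2) unfolding mem_ten_elt by blast
  have "y \<in> X" "y' \<in> X" using sim_rel_dom[OF 1(1)] sim_rel_dom[OF 2(1)] by auto
  moreover have "y \<inter> y' \<noteq> {}" using 1 2 by auto
  ultimately have "y = y'" by (rule disjoint)
  then show ?thesis using 1 2 by (auto intro: sim_rel_trans sim_rel_sym)
qed

lemma ten_elt_eq_iff:
  assumes "n \<in> NN" "x \<in> X"
  shows "ten_elt (X, d, S) n x = ten_elt (X, d, S) n' x' \<longleftrightarrow> ((n, x), (n', x')) \<in> sim_rel X S"
proof
  assume "ten_elt (X, d, S) n x = ten_elt (X, d, S) n' x'"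
  then show "((n, x), (n', x')) \<in> sim_rel X S"
    using ten_elt_nonempty[OF assms] sim_rel_if_ten_elt_meet by blast
next
  assume "((n, x), (n', x')) \<in> sim_rel X S"
  then have "sim_rel X S `` {(n, x)} = sim_rel X S `` {(n', x')}"
    by (auto intro: sim_rel_trans sim_rel_sym)
  then show "ten_elt (X, d, S) n x = ten_elt (X, d, S) n' x'"
    unfolding ten_elt_def by simp
qed

lemma ten_elt_glue:
  assumes "n \<in> NN" "n' \<in> NN" "adjacent n n'" "q \<in> M0" "q' \<in> M0"
    and "cell_map n q = cell_map n' q'"
  shows "ten_elt (X, d, S) n (S q) = ten_elt (X, d, S) n' (S q')"
proof -
  have "((n, S q), (n', S q')) \<in> gen_rel X S"
    using assms by (rule gen_relI)
  then have "((n, S q), (n', S q')) \<in> sim_rel X S"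
    using assms S_in unfolding sim_rel_def by auto
  then show ?thesis using ten_elt_eq_iff assms S_in by blast
qed

lemma tensor_dist_ten_elt:
  assumes "n \<in> NN" "x \<in> X" "m \<in> NN" "y \<in> X"
  shows "fst (snd (tensor (X, d, S))) (ten_elt (X, d, S) n x) (ten_elt (X, d, S) m y)
    = chain_dist (X, d, S) (n, x) (m, y)"
proof -
  have "{chain_dist (X, d, S) z w | z w. z \<in> NN \<times> X \<and> w \<in> NN \<times> X \<and>
          ten_elt (X, d, S) (fst z) (snd z) = ten_elt (X, d, S) n x \<and>
          ten_elt (X, d, S) (fst w) (snd w) = ten_elt (X, d, S) m y}
        = {chain_dist (X, d, S) (n, x) (m, y)}" (is "?C = _")
  proof (intro set_eqI iffI)
    fix c assume "c \<in> ?C"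
    then obtain z w where zw: "z \<in> NN \<times> X" "w \<in> NN \<times> X" "c = chain_dist (X, d, S) z w"
      "ten_elt (X, d, S) (fst z) (snd z) = ten_elt (X, d, S) n x"
      "ten_elt (X, d, S) (fst w) (snd w) = ten_elt (X, d, S) m y"
      by blast
    have "((fst z, snd z), (n, x)) \<in> sim_rel X S" "((fst w, snd w), (m, y)) \<in> sim_rel X S"
      using zw(1,2,4,5) ten_elt_eq_iff[of "fst z" "snd z" n x] ten_elt_eq_iff[of "fst w" "snd w" m y]
      by (auto simp: mem_Times_iff)
    then show "c \<in> {chain_dist (X, d, S) (n, x) (m, y)}"
      using chain_dist_sim_cong zw(3) by simp
  next
    fix c assume "c \<in> {chain_dist (X, d, S) (n, x) (m, y)}"
    then show "c \<in> ?C"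
      using assms by (intro CollectI exI[of _ "(n, x)"] exI[of _ "(m, y)"]) auto
  qed
  then show ?thesis by (simp add: tensor_dist)
qed

lemma tensor_dist_same_cell:
  assumes "n \<in> NN" "x \<in> X" "y \<in> X"
  shows "fst (snd (tensor (X, d, S))) (ten_elt (X, d, S) n x) (ten_elt (X, d, S) n y) \<le> d x y / 3"
  using tensor_dist_ten_elt chain_dist_same_cell assms by simp

lemma tensor_square_ten_elt:
  assumes "q \<in> M0"
  shows "\<exists>n\<in>NN. cell_coords n q \<in> M0 \<and>
    snd (snd (tensor (X, d, S))) q = ten_elt (X, d, S) n (S (cell_coords n q))"
proof -
  define n where "n = (SOME n. n \<in> NN \<and> cell n q)"
  have "\<exists>n. n \<in> NN \<and> cell n q"
    using cell_exists M0_subset_unit_sq assms by blast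
  then have "n \<in> NN \<and> cell n q"
    unfolding n_def by (rule someI_ex)
  moreover have "snd (snd (tensor (X, d, S))) q = ten_elt (X, d, S) n (S (cell_coords n q))"
    by (simp add: tensor_square n_def Let_def)
  ultimately show ?thesis
    using cell_coords_M0[OF assms] by blast
qed

lemma tensor_square_inj: "inj_on (snd (snd (tensor (X, d, S)))) M0"
proof (rule inj_onI)
  fix q q' assume q: "q \<in> M0" and q': "q' \<in> M0"
    and eq: "snd (snd (tensor (X, d, S))) q = snd (snd (tensor (X, d, S))) q'"
  obtain n where n: "n \<in> NN" "cell_coords n q \<in> M0"
    "snd (snd (tensor (X, d, S))) q = ten_elt (X, d, S) n (S (cell_coords n q))"
    using tensor_square_ten_elt[OF q] by blast
  obtain n' where n': "n' \<in> NN" "cell_coords n' q' \<in> M0"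
    "snd (snd (tensor (X, d, S))) q' = ten_elt (X, d, S) n' (S (cell_coords n' q'))"
    using tensor_square_ten_elt[OF q'] by blast
  have "((n, S (cell_coords n q)), (n', S (cell_coords n' q'))) \<in> sim_rel X S"
    using ten_elt_eq_iff[OF n(1) S_in[OF n(2)]] eq n(3) n'(3) by simp
  from sim_rel_cases[OF S_inj this] show "q = q'"
  proof
    assume eq: "(n, S (cell_coords n q)) = (n', S (cell_coords n' q'))"
    have "cell_coords n q = cell_coords n' q'"
      using inj_onD[OF S_inj _ n(2) n'(2)] eq by blast
    then show ?thesis
      using eq cell_map_cell_coords by (metis prod.inject)
  next
    assume "\<exists>p\<in>M0. \<exists>p'\<in>M0. snd (n, S (cell_coords n q)) = S p \<and>
      snd (n', S (cell_coords n' q')) = S p' \<and>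
      cell_map (fst (n, S (cell_coords n q))) p = cell_map (fst (n', S (cell_coords n' q'))) p'"
    then obtain p p' where p: "p \<in> M0" "p' \<in> M0" "S (cell_coords n q) = S p"
      "S (cell_coords n' q') = S p'" "cell_map n p = cell_map n' p'" by auto
    have "cell_coords n q = p" "cell_coords n' q' = p'"
      using inj_onD[OF S_inj] n(2) n'(2) p by auto
    then show ?thesis
      using p(5) cell_map_cell_coords by metis
  qed
qed

lemma valid_enc_tensor:
  "valid_enc (fst (tensor (X, d, S))) (fst (snd (tensor (X, d, S)))) (snd (snd (tensor (X, d, S))))"
proof -
  have carrier: "a \<in> fst (tensor (X, d, S)) \<longleftrightarrow> (\<exists>n\<in>NN. \<exists>x\<in>X. a = ten_elt (X, d, S) n x)" for a
    unfolding tensor_carrier by blast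
  show ?thesis
  proof unfold_locales
    fix a b assume "a \<in> fst (tensor (X, d, S))" "b \<in> fst (tensor (X, d, S))"
    then show "0 \<le> fst (snd (tensor (X, d, S))) a b"
      unfolding carrier using tensor_dist_ten_elt chain_dist_nonneg by auto
  next
    fix a assume "a \<in> fst (tensor (X, d, S))"
    then show "a \<noteq> {}" unfolding carrier using ten_elt_nonempty by blast
  next
    fix a b assume "a \<in> fst (tensor (X, d, S))" "b \<in> fst (tensor (X, d, S))" "a \<inter> b \<noteq> {}"
    then show "a = b"
      unfolding carrier using sim_rel_if_ten_elt_meet ten_elt_eq_iff by blast
  next
    fix a assume "a \<in> fst (tensor (X, d, S))"
    then show "fst (snd (tensor (X, d, S))) a a = 0"
      unfolding carrier using tensor_dist_ten_elt chain_dist_refl by auto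
  next
    fix a b c assume "a \<in> fst (tensor (X, d, S))" "b \<in> fst (tensor (X, d, S))" "c \<in> fst (tensor (X, d, S))"
    then show "fst (snd (tensor (X, d, S))) a c
      \<le> fst (snd (tensor (X, d, S))) a b + fst (snd (tensor (X, d, S))) b c"
      unfolding carrier using tensor_dist_ten_elt chain_dist_triangle by auto
  next
    fix q assume "q \<in> M0"
    then show "snd (snd (tensor (X, d, S))) q \<in> fst (tensor (X, d, S))"
      unfolding carrier using tensor_square_ten_elt S_in by blast
  qed (rule tensor_square_inj)
qed

end

section \<open>Iterated tensor powers\<close>

definition tcarrier :: "nat \<Rightarrow> 'b sqms \<Rightarrow> 'b enc set" where
  "tcarrier p B = fst (tensor_pow p B)"

definition tsquare :: "nat \<Rightarrow> 'b sqms \<Rightarrow> real \<times> real \<Rightarrow> 'b enc" where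
  "tsquare p B = snd (snd (tensor_pow p B))"

lemma tensor_pow_eq: "tensor_pow p B = (tcarrier p B, tdist p B, tsquare p B)"
  unfolding tcarrier_def tdist_def tsquare_def by simp

lemma tensor_pow_Suc_eq: "tensor_pow (Suc p) B = tensor (tcarrier p B, tdist p B, tsquare p B)"
  by (metis tensor_pow.simps(2) tensor_pow_eq)

lemma tcarrier_Suc: "tcarrier (Suc p) B = fst (tensor (tcarrier p B, tdist p B, tsquare p B))"
  unfolding tcarrier_def[of "Suc p"] tensor_pow_Suc_eq ..

lemma tdist_Suc: "tdist (Suc p) B = fst (snd (tensor (tcarrier p B, tdist p B, tsquare p B)))"
  unfolding tdist_def[of "Suc p"] tensor_pow_Suc_eq ..

lemma tsquare_Suc: "tsquare (Suc p) B = snd (snd (tensor (tcarrier p B, tdist p B, tsquare p B)))"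
  unfolding tsquare_def[of "Suc p"] tensor_pow_Suc_eq ..

lemma ten_elt_in_tcarrier_Suc:
  "n \<in> NN \<Longrightarrow> x \<in> tcarrier p B \<Longrightarrow> ten_elt (tensor_pow p B) n x \<in> tcarrier (Suc p) B"
  unfolding tcarrier_Suc tensor_carrier tensor_pow_eq[of p] by blast

lemma tensor_pow_0:
  "tcarrier 0 (B, dB, SB) = (\<lambda>b. {([], b)}) ` B"
  "tdist 0 (B, dB, SB) {([], b)} {([], c)} = dB b c"
  "tsquare 0 (B, dB, SB) q = {([], SB q)}"
  by (simp_all add: tcarrier_def tdist_def tsquare_def base_enc_def)

lemma valid_enc_tensor_pow:
  assumes "square_ms B dB SB"
  shows "valid_enc (tcarrier p (B, dB, SB)) (tdist p (B, dB, SB)) (tsquare p (B, dB, SB))"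
proof (induction p)
  case 0
  interpret Metric_space B dB
    using assms unfolding square_ms_def by simp
  have "SB ` M0 \<subseteq> B" "inj_on SB M0"
    using assms unfolding square_ms_def by auto
  then show ?case
    by unfold_locales (auto simp: tensor_pow_0 inj_on_def intro: nonneg triangle)
next
  case (Suc p)
  then show ?case
    unfolding tcarrier_Suc tdist_Suc tsquare_Suc by (rule valid_enc.valid_enc_tensor)
qed

lemma tsquare_Suc_ten_elt:
  assumes "square_ms B dB SB" "q \<in> M0"
  shows "\<exists>n\<in>NN. cell_coords n q \<in> M0 \<and>
    tsquare (Suc p) (B, dB, SB) q = ten_elt (tensor_pow p (B, dB, SB)) n (tsquare p (B, dB, SB) (cell_coords n q))"
  using valid_enc.tensor_square_ten_elt[OF valid_enc_tensor_pow[OF assms(1)] assms(2)]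
  unfolding tsquare_Suc tensor_pow_eq[of p] .

section \<open>Points represented by elements\<close>

definition l1_dist :: "real \<times> real \<Rightarrow> real \<times> real \<Rightarrow> real" where
  "l1_dist g h = \<bar>fst g - fst h\<bar> + \<bar>snd g - snd h\<bar>"

lemma l1_dist_triangle: "l1_dist a b \<le> l1_dist a c + l1_dist c b"
  unfolding l1_dist_def by linarith

lemma l1_dist_cell_map: "l1_dist (cell_map n g) (cell_map n h) = l1_dist g h / 3"
  unfolding l1_dist_def cell_map_def by (simp add: abs_div_pos[symmetric] diff_divide_distrib[symmetric])

lemma l1_dist_unit_sq: "g \<in> unit_sq \<Longrightarrow> h \<in> unit_sq \<Longrightarrow> l1_dist g h \<le> 2"
  unfolding l1_dist_def unit_sq_def by auto

text \<open>\<open>placed A p B x g\<close>: \<open>x = n_0 \<otimes> \<dots> \<otimes> n_(p-1) \<otimes> S_B(a)\<close> with all \<open>n_k \<in> N\<close> and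
  \<open>a \<in> A\<close>, and \<open>g = \<Sum> n_k / 3^(k+1) + a / 3^p\<close> is the point of the unit square it represents.\<close>
fun placed :: "(real \<times> real) set \<Rightarrow> nat \<Rightarrow> 'b sqms \<Rightarrow> 'b enc \<Rightarrow> real \<times> real \<Rightarrow> bool" where
  "placed A 0 B x g \<longleftrightarrow> g \<in> A \<and> x = {([], snd (snd B) g)}"
| "placed A (Suc p) B x g \<longleftrightarrow>
     (\<exists>n\<in>NN. \<exists>x' g'. placed A p B x' g' \<and> x = ten_elt (tensor_pow p B) n x' \<and> g = cell_map n g')"

lemma placed_mono: "A \<subseteq> A' \<Longrightarrow> placed A p B x g \<Longrightarrow> placed A' p B x g"
proof (induction p arbitrary: x g)
  case (Suc p)
  then show ?case unfolding placed.simps by blast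
qed auto

lemma square_ms_S_in: "square_ms B dB SB \<Longrightarrow> q \<in> M0 \<Longrightarrow> SB q \<in> B"
  unfolding square_ms_def by auto

lemma placed_in:
  assumes "square_ms B dB SB" "A \<subseteq> M0" "placed A p (B, dB, SB) x g"
  shows "x \<in> tcarrier p (B, dB, SB) \<and> g \<in> unit_sq"
  using assms(3)
proof (induction p arbitrary: x g)
  case 0
  then have x: "x = {([], SB g)}" and "g \<in> A" by simp_all
  then have "SB g \<in> B" "g \<in> unit_sq"
    using assms(1,2) M0_subset_unit_sq square_ms_S_in by blast+
  then show ?case
    using x by (simp add: tensor_pow_0)
next
  case (Suc p)
  then obtain n x' g' where "n \<in> NN" "x' \<in> tcarrier p (B, dB, SB)" "g' \<in> unit_sq"
    "x = ten_elt (tensor_pow p (B, dB, SB)) n x'" "g = cell_map n g'"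
    unfolding placed.simps by blast
  then show ?case
    using ten_elt_in_tcarrier_Suc cell_map_unit_sq by blast
qed

lemma tsquare_placed:
  assumes "square_ms B dB SB" "q \<in> M0"
  shows "placed M0 p (B, dB, SB) (tsquare p (B, dB, SB) q) q"
  using assms(2)
proof (induction p arbitrary: q)
  case 0
  then show ?case by (simp add: tensor_pow_0)
next
  case (Suc p)
  then obtain n where "n \<in> NN" "cell_coords n q \<in> M0"
    "tsquare (Suc p) (B, dB, SB) q = ten_elt (tensor_pow p (B, dB, SB)) n (tsquare p (B, dB, SB) (cell_coords n q))"
    using tsquare_Suc_ten_elt[OF assms(1)] by blast
  then show ?case
    using Suc.IH cell_map_cell_coords by (metis placed.simps(2))
qed

abbreviation square_corners :: "(real \<times> real) set" where
  "square_corners \<equiv> {0, 1} \<times> {0, 1}"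

lemma square_corners_subset_M0: "square_corners \<subseteq> M0"
  unfolding M0_def by auto

definition grid_point :: "nat \<Rightarrow> real \<times> real \<Rightarrow> bool" where
  "grid_point p g \<longleftrightarrow> 3 ^ p * fst g \<in> \<int> \<and> 3 ^ p * snd g \<in> \<int>"

lemma Ints_unit_interval: "(a :: real) \<in> \<int> \<Longrightarrow> 0 \<le> a \<Longrightarrow> a \<le> 1 \<Longrightarrow> a \<in> {0, 1}"
  by (elim Ints_cases) auto

lemma placed_grid_point: "placed square_corners p B x g \<Longrightarrow> grid_point p g"
proof (induction p arbitrary: x g)
  case 0
  then show ?case by (auto simp: grid_point_def)
next
  case (Suc p)
  then obtain n g' where "grid_point p g'" "g = cell_map n g'"
    unfolding placed.simps by blast
  moreover have "3 ^ Suc p * ((real k + a) / 3) = 3 ^ p * real k + 3 ^ p * a" for k :: nat and a :: real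
    by (simp add: field_simps)
  ultimately show ?case
    unfolding grid_point_def cell_map_def by (auto intro: Ints_add Ints_mult Ints_power Ints_of_nat)
qed

lemma tsquare_placed_corners:
  assumes "square_ms B dB SB" "q \<in> M0" "grid_point p q"
  shows "placed square_corners p (B, dB, SB) (tsquare p (B, dB, SB) q) q"
  using assms(2,3)
proof (induction p arbitrary: q)
  case 0
  then have "q \<in> {0..1} \<times> {0..1}" "fst q \<in> \<int>" "snd q \<in> \<int>"
    using M0_subset_unit_sq unfolding grid_point_def unit_sq_def by auto
  then have "fst q \<in> {0, 1}" "snd q \<in> {0, 1}"
    using Ints_unit_interval by (auto simp: mem_Times_iff simp del: insert_iff)
  then have "q \<in> square_corners"
    by (simp only: mem_Times_iff)
  then show ?case
    by (simp add: tensor_pow_0)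
next
  case (Suc p)
  then obtain n where n: "n \<in> NN" "cell_coords n q \<in> M0"
    "tsquare (Suc p) (B, dB, SB) q = ten_elt (tensor_pow p (B, dB, SB)) n (tsquare p (B, dB, SB) (cell_coords n q))"
    using tsquare_Suc_ten_elt[OF assms(1)] by blast
  have "3 ^ p * (3 * a - real k) = 3 ^ Suc p * a - 3 ^ p * real k" for k :: nat and a :: real
    by (simp add: algebra_simps)
  then have "grid_point p (cell_coords n q)"
    using Suc.prems(2) unfolding grid_point_def cell_coords_def
    by (auto intro: Ints_diff Ints_mult Ints_power Ints_of_nat)
  then show ?case
    using Suc.IH n cell_map_cell_coords by (metis placed.simps(2))
qed

fun tens_point :: "(nat \<times> nat) list \<Rightarrow> real \<times> real \<Rightarrow> real \<times> real" where
  "tens_point [] c = c"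
| "tens_point (n # ns) c = cell_map n (tens_point ns c)"

lemma tens_elem_placed:
  "set ns \<subseteq> NN \<Longrightarrow> c \<in> A \<Longrightarrow>
     placed A (length ns) (B, dB, SB) (tens_elem (B, dB, SB) ns (SB c)) (tens_point ns c)"
proof (induction ns)
  case (Cons n ns)
  then have "n \<in> NN" "placed A (length ns) (B, dB, SB) (tens_elem (B, dB, SB) ns (SB c)) (tens_point ns c)"
    by auto
  then show ?case
    unfolding tens_elem.simps tens_point.simps length_Cons placed.simps by blast
qed simp

section \<open>Lower bound\<close>

context valid_enc
begin

lemma step_cost_lower_bound:
  assumes dist_ge: "\<And>x y g h. P x g \<Longrightarrow> P y h \<Longrightarrow> l1_dist g h \<le> d x y"
    and P_in: "\<And>x g. P x g \<Longrightarrow> x \<in> X \<and> g \<in> unit_sq"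
    and P_S: "\<And>q. q \<in> M0 \<Longrightarrow> P (S q) q"
    and z: "n \<in> NN" "x \<in> X" and w: "n' \<in> NN" "x' \<in> X" and "P x0 g0"
  shows "(\<exists>x1 g1. P x1 g1 \<and> l1_dist (cell_map n g0) (cell_map n' g1) + d x1 x' / 3
            \<le> d x0 x / 3 + step_cost (X, d, S) (n, x) (n', x'))
    \<or> n \<noteq> n' \<and> step_cost (X, d, S) (n, x) (n', x') = 2"
proof -
  have x0: "x0 \<in> X" using P_in \<open>P x0 g0\<close> by blast
  consider "((n, x), (n', x')) \<in> sim_rel X S" | "((n, x), (n', x')) \<notin> sim_rel X S" "n = n'"
    | "((n, x), (n', x')) \<notin> sim_rel X S" "n \<noteq> n'"
    by blast
  then show ?thesis
  proof cases
    case 1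
    then have cost: "step_cost (X, d, S) (n, x) (n', x') = 0"
      by (simp add: step_cost_def)
    from sim_rel_cases[OF S_inj 1] show ?thesis
    proof
      assume "(n, x) = (n', x')"
      then show ?thesis
        using \<open>P x0 g0\<close> cost by (intro disjI1 exI[of _ x0] exI[of _ g0]) (auto simp: l1_dist_def)
    next
      assume "\<exists>q\<in>M0. \<exists>q'\<in>M0. snd (n, x) = S q \<and> snd (n', x') = S q' \<and>
        cell_map (fst (n, x)) q = cell_map (fst (n', x')) q'"
      then obtain q q' where q: "q \<in> M0" "q' \<in> M0" "x = S q" "x' = S q'"
        "cell_map n q = cell_map n' q'" by auto
      have "l1_dist (cell_map n g0) (cell_map n' q') \<le> d x0 x / 3"
        using dist_ge[OF \<open>P x0 g0\<close> P_S[OF q(1)]] q by (simp add: l1_dist_cell_map flip: q(5))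
      then show ?thesis
        using P_S[OF q(2)] zero[OF w(2)] cost q(4)
        by (intro disjI1 exI[of _ x'] exI[of _ q']) simp
    qed
  next
    case 2
    then have "step_cost (X, d, S) (n, x) (n', x') = d x x' / 3"
      by (simp add: step_cost_def pre_dist_def)
    moreover have "d x0 x' \<le> d x0 x + d x x'" using triangle x0 z w by blast
    ultimately show ?thesis
      using \<open>P x0 g0\<close> 2 by (intro disjI1 exI[of _ x0] exI[of _ g0]) (auto simp: l1_dist_def)
  next
    case 3
    then show ?thesis by (simp add: step_cost_def pre_dist_def)
  qed
qed

text \<open>The extra start point \<open>x\<^sub>0\<close>, joined to \<open>x\<close> by a virtual step inside cell \<open>n\<close>,
  makes the statement strong enough for induction along the chain.\<close>
lemma chain_cost_lower_bound:
  assumes dist_ge: "\<And>x y g h. P x g \<Longrightarrow> P y h \<Longrightarrow> l1_dist g h \<le> d x y"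
    and P_in: "\<And>x g. P x g \<Longrightarrow> x \<in> X \<and> g \<in> unit_sq"
    and P_S: "\<And>q. q \<in> M0 \<Longrightarrow> P (S q) q"
    and y: "P y h" "m \<in> NN"
  shows "zs \<noteq> [] \<Longrightarrow> set zs \<subseteq> NN \<times> X \<Longrightarrow> hd zs = (n, x) \<Longrightarrow> last zs = (m, y) \<Longrightarrow>
    P x0 g0 \<Longrightarrow> l1_dist (cell_map n g0) (cell_map m h) \<le> d x0 x / 3 + chain_cost (X, d, S) zs"
proof (induction zs arbitrary: n x x0 g0 rule: induct_list012)
  case (2 z)
  then show ?case using dist_ge[OF _ y(1)] by (simp add: l1_dist_cell_map)
next
  case (3 z w zs)
  obtain n' x' where w: "w = (n', x')" by fastforce
  have z: "z = (n, x)" "n \<in> NN" "x \<in> X" and x': "n' \<in> NN" "x' \<in> X"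
    using "3.prems" w by auto
  have x0: "x0 \<in> X" "g0 \<in> unit_sq" using P_in "3.prems"(5) by auto
  have cost: "chain_cost (X, d, S) (z # w # zs) = step_cost (X, d, S) (n, x) (n', x') + chain_cost (X, d, S) (w # zs)"
    using z w by simp
  from step_cost_lower_bound[OF assms(1-3) z(2,3) x' "3.prems"(5)] show ?case
  proof
    assume "\<exists>x1 g1. P x1 g1 \<and> l1_dist (cell_map n g0) (cell_map n' g1) + d x1 x' / 3
      \<le> d x0 x / 3 + step_cost (X, d, S) (n, x) (n', x')"
    then obtain x1 g1 where "P x1 g1" and step: "l1_dist (cell_map n g0) (cell_map n' g1) + d x1 x' / 3
      \<le> d x0 x / 3 + step_cost (X, d, S) (n, x) (n', x')" by blast
    have "l1_dist (cell_map n' g1) (cell_map m h) \<le> d x1 x' / 3 + chain_cost (X, d, S) (w # zs)"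
      using "3.IH"(2)[of n' x' x1 g1] "3.prems" w \<open>P x1 g1\<close> by simp
    then show ?thesis
      using step cost l1_dist_triangle[of "cell_map n g0" "cell_map m h" "cell_map n' g1"] by simp
  next
    assume "n \<noteq> n' \<and> step_cost (X, d, S) (n, x) (n', x') = 2"
    moreover have "l1_dist (cell_map n g0) (cell_map m h) \<le> 2"
      using l1_dist_unit_sq cell_map_unit_sq z x0 y P_in by blast
    moreover have "0 \<le> d x0 x" "0 \<le> chain_cost (X, d, S) (w # zs)"
      using nonneg x0 z chain_cost_nonneg "3.prems"(2) by auto
    ultimately show ?thesis using cost by simp
  qed
qed simp

lemma l1_dist_le_tensor_dist:
  assumes dist_ge: "\<And>x y g h. P x g \<Longrightarrow> P y h \<Longrightarrow> l1_dist g h \<le> d x y"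
    and P_in: "\<And>x g. P x g \<Longrightarrow> x \<in> X \<and> g \<in> unit_sq"
    and P_S: "\<And>q. q \<in> M0 \<Longrightarrow> P (S q) q"
    and "P x g" "P y h" "n \<in> NN" "m \<in> NN"
  shows "l1_dist (cell_map n g) (cell_map m h)
    \<le> fst (snd (tensor (X, d, S))) (ten_elt (X, d, S) n x) (ten_elt (X, d, S) m y)"
proof -
  have "x \<in> X" "y \<in> X" using P_in assms(4,5) by auto
  moreover have "l1_dist (cell_map n g) (cell_map m h) \<le> chain_dist (X, d, S) (n, x) (m, y)"
  proof (rule chain_dist_greatest)
    fix c assume "c \<in> chain_costs (X, d, S) (n, x) (m, y)"
    then obtain zs where "zs \<noteq> []" "set zs \<subseteq> NN \<times> X" "hd zs = (n, x)" "last zs = (m, y)"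
      "c = chain_cost (X, d, S) zs"
      unfolding chain_costs_def by auto
    then show "l1_dist (cell_map n g) (cell_map m h) \<le> c"
      using chain_cost_lower_bound[OF assms(1-3,5,7), of zs n x x g] assms(4) zero[OF \<open>x \<in> X\<close>]
      by simp
  qed (use assms P_in in auto)
  ultimately show ?thesis using tensor_dist_ten_elt assms(6,7) by simp
qed

end

lemma l1_dist_le_tdist:
  assumes "square_ms B dB SB"
  shows "placed M0 p (B, dB, SB) x g \<Longrightarrow> placed M0 p (B, dB, SB) y h \<Longrightarrow>
    l1_dist g h \<le> tdist p (B, dB, SB) x y"
proof (induction p arbitrary: x y g h)
  case 0
  then show ?case
    using assms unfolding square_ms_def by (auto simp: tensor_pow_0 l1_dist_def)
next
  case (Suc p)
  obtain n x' g' where x: "n \<in> NN" "placed M0 p (B, dB, SB) x' g'" "g = cell_map n g'"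
    "x = ten_elt (tcarrier p (B, dB, SB), tdist p (B, dB, SB), tsquare p (B, dB, SB)) n x'"
    using Suc.prems(1) unfolding placed.simps tensor_pow_eq[of p] by blast
  obtain m y' h' where y: "m \<in> NN" "placed M0 p (B, dB, SB) y' h'" "h = cell_map m h'"
    "y = ten_elt (tcarrier p (B, dB, SB), tdist p (B, dB, SB), tsquare p (B, dB, SB)) m y'"
    using Suc.prems(2) unfolding placed.simps tensor_pow_eq[of p] by blast
  show ?case
    unfolding tdist_Suc x y
    using valid_enc.l1_dist_le_tensor_dist[OF valid_enc_tensor_pow[OF assms], of "placed M0 p (B, dB, SB)"]
      Suc.IH placed_in[OF assms] tsquare_placed[OF assms] x y
    by blast
qed

section \<open>Upper bound\<close>

lemma dist_corners_le_l1_dist: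
  assumes "square_ms B dB SB" "g \<in> square_corners" "h \<in> square_corners"
  shows "dB (SB g) (SB h) \<le> l1_dist g h"
proof -
  interpret Metric_space B dB using assms(1) unfolding square_ms_def by simp
  obtain a b a' b' where g: "g = (a, b)" and h: "h = (a', b')"
    and corners: "a \<in> {0, 1}" "b \<in> {0, 1}" "a' \<in> {0, 1}" "b' \<in> {0, 1}"
    using assms(2,3) by auto
  have "(a, b) \<in> M0" "(a, b') \<in> M0" "(a', b') \<in> M0"
    using corners unfolding M0_def by auto
  then have "dB (SB (a, b)) (SB (a', b')) \<le> dB (SB (a, b)) (SB (a, b')) + dB (SB (a, b')) (SB (a', b'))"
    using assms(1) square_ms_S_in triangle by blast
  moreover have "dB (SB (a, b)) (SB (a, b')) = \<bar>b' - b\<bar>" "dB (SB (a, b')) (SB (a', b')) = \<bar>a' - a\<bar>"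
    using assms(1) corners unfolding square_ms_def by auto
  ultimately show ?thesis unfolding g h l1_dist_def by simp
qed

definition cell_dist :: "nat \<times> nat \<Rightarrow> nat \<times> nat \<Rightarrow> nat" where
  "cell_dist n m = nat \<bar>int (fst n) - int (fst m)\<bar> + nat \<bar>int (snd n) - int (snd m)\<bar>"

lemma l1_dist_through:
  assumes "min (fst a) (fst b) \<le> fst c" "fst c \<le> max (fst a) (fst b)"
    and "min (snd a) (snd b) \<le> snd c" "snd c \<le> max (snd a) (snd b)"
  shows "l1_dist a c + l1_dist c b = l1_dist a b"
  using assms unfolding l1_dist_def min_def max_def by (auto split: if_splits)

lemma cell_crossing:
  assumes "n \<in> NN" "m \<in> NN" "n \<noteq> m" "g \<in> unit_sq" "grid_point p g"
  obtains n' r r' where "n' \<in> NN" "adjacent n n'" "cell_dist n' m < cell_dist n m"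
    "r \<in> M0" "r' \<in> M0" "grid_point p r" "grid_point p r'" "cell_map n r = cell_map n' r'"
    "\<And>h. h \<in> unit_sq \<Longrightarrow>
      l1_dist (cell_map n g) (cell_map n r) + l1_dist (cell_map n r) (cell_map m h)
        = l1_dist (cell_map n g) (cell_map m h)"
proof -
  obtain i j k l where nm: "n = (i, j)" "m = (k, l)" "i \<le> 2" "j \<le> 2" "k \<le> 2" "l \<le> 2"
    using assms(1,2) unfolding NN_def by auto
  obtain a b where g: "g = (a, b)" "0 \<le> a" "a \<le> 1" "0 \<le> b" "b \<le> 1" "3 ^ p * a \<in> \<int>" "3 ^ p * b \<in> \<int>"
    using assms(4,5) unfolding unit_sq_def grid_point_def by auto
  have grid: "3 ^ p * (0 :: real) \<in> \<int>" "3 ^ p * (1 :: real) \<in> \<int>"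
    by (simp_all add: Ints_power)
  consider "i < k" | "k < i" | "j < l" | "l < j"
    using assms(3) nm by fastforce
  then show thesis
  proof cases
    case 1
    show thesis
      by (rule that[of "(Suc i, j)" "(1, b)" "(0, b)"])
        (use 1 nm g grid in \<open>auto simp: NN_def adjacent_def cell_dist_def M0_def grid_point_def
           cell_map_def unit_sq_def min_def max_def intro!: l1_dist_through\<close>)
  next
    case 2
    then obtain i' where "i = Suc i'" using less_imp_Suc_add by blast
    then show thesis
      by (intro that[of "(i', j)" "(0, b)" "(1, b)"])
        (use 2 nm g grid in \<open>auto simp: NN_def adjacent_def cell_dist_def M0_def grid_point_def
           cell_map_def unit_sq_def min_def max_def intro!: l1_dist_through\<close>)
  next
    case 3
    show thesis
      by (rule that[of "(i, Suc j)" "(a, 1)" "(a, 0)"])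
        (use 3 nm g grid in \<open>auto simp: NN_def adjacent_def cell_dist_def M0_def grid_point_def
           cell_map_def unit_sq_def min_def max_def intro!: l1_dist_through\<close>)
  next
    case 4
    then obtain j' where "j = Suc j'" using less_imp_Suc_add by blast
    then show thesis
      by (intro that[of "(i, j')" "(a, 0)" "(a, 1)"])
        (use 4 nm g grid in \<open>auto simp: NN_def adjacent_def cell_dist_def M0_def grid_point_def
           cell_map_def unit_sq_def min_def max_def intro!: l1_dist_through\<close>)
  qed
qed

lemma tdist_Suc_same_cell:
  assumes sq: "square_ms B dB SB"
    and IH: "tdist p (B, dB, SB) x y \<le> l1_dist g h"
    and "n \<in> NN" "placed square_corners p (B, dB, SB) x g" "placed square_corners p (B, dB, SB) y h"
  shows "tdist (Suc p) (B, dB, SB) (ten_elt (tensor_pow p (B, dB, SB)) n x) (ten_elt (tensor_pow p (B, dB, SB)) n y)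
    \<le> l1_dist (cell_map n g) (cell_map n h)"
proof -
  interpret valid_enc "tcarrier p (B, dB, SB)" "tdist p (B, dB, SB)" "tsquare p (B, dB, SB)"
    by (rule valid_enc_tensor_pow[OF sq])
  have "x \<in> tcarrier p (B, dB, SB)" "y \<in> tcarrier p (B, dB, SB)"
    using placed_in[OF sq square_corners_subset_M0] assms(4,5) by blast+
  then have "tdist (Suc p) (B, dB, SB) (ten_elt (tensor_pow p (B, dB, SB)) n x) (ten_elt (tensor_pow p (B, dB, SB)) n y)
    \<le> tdist p (B, dB, SB) x y / 3"
    using tensor_dist_same_cell \<open>n \<in> NN\<close> unfolding tdist_Suc tensor_pow_eq[of p] by blast
  also have "\<dots> \<le> l1_dist (cell_map n g) (cell_map n h)"
    using IH by (simp add: l1_dist_cell_map)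
  finally show ?thesis .
qed

lemma tdist_Suc_le_l1_dist:
  assumes sq: "square_ms B dB SB"
    and IH: "\<And>x y g h. placed square_corners p (B, dB, SB) x g \<Longrightarrow>
      placed square_corners p (B, dB, SB) y h \<Longrightarrow> tdist p (B, dB, SB) x y \<le> l1_dist g h"
  shows "n \<in> NN \<Longrightarrow> m \<in> NN \<Longrightarrow> placed square_corners p (B, dB, SB) x g \<Longrightarrow>
    placed square_corners p (B, dB, SB) y h \<Longrightarrow>
    tdist (Suc p) (B, dB, SB) (ten_elt (tensor_pow p (B, dB, SB)) n x) (ten_elt (tensor_pow p (B, dB, SB)) m y)
      \<le> l1_dist (cell_map n g) (cell_map m h)"
proof (induction "cell_dist n m" arbitrary: n x g rule: less_induct)
  case less
  let ?t = "ten_elt (tensor_pow p (B, dB, SB))"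
  interpret valid_enc "tcarrier (Suc p) (B, dB, SB)" "tdist (Suc p) (B, dB, SB)" "tsquare (Suc p) (B, dB, SB)"
    by (rule valid_enc_tensor_pow[OF sq])
  have x: "x \<in> tcarrier p (B, dB, SB)" "g \<in> unit_sq" "grid_point p g"
    and y: "y \<in> tcarrier p (B, dB, SB)" "h \<in> unit_sq"
    using placed_in[OF sq square_corners_subset_M0] placed_grid_point less.prems(3,4) by blast+
  show ?case
  proof (cases "n = m")
    case True
    then show ?thesis
      using tdist_Suc_same_cell[OF sq IH[OF less.prems(3,4)] less.prems(1,3,4)] by simp
  next
    case False
    obtain n' r r' where cross: "n' \<in> NN" "adjacent n n'" "cell_dist n' m < cell_dist n m"
      "r \<in> M0" "r' \<in> M0" "grid_point p r" "grid_point p r'" "cell_map n r = cell_map n' r'"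
      "l1_dist (cell_map n g) (cell_map n r) + l1_dist (cell_map n r) (cell_map m h)
        = l1_dist (cell_map n g) (cell_map m h)"
      using cell_crossing[OF less.prems(1,2) False x(2,3)] y(2) by metis
    let ?r = "tsquare p (B, dB, SB) r" and ?r' = "tsquare p (B, dB, SB) r'"
    have r: "placed square_corners p (B, dB, SB) ?r r" "placed square_corners p (B, dB, SB) ?r' r'"
      using tsquare_placed_corners[OF sq] cross by auto
    have glue: "?t n ?r = ?t n' ?r'"
      using valid_enc.ten_elt_glue[OF valid_enc_tensor_pow[OF sq]] cross less.prems(1)
      unfolding tensor_pow_eq[of p] by blast
    have "tdist (Suc p) (B, dB, SB) (?t n x) (?t m y)
      \<le> tdist (Suc p) (B, dB, SB) (?t n x) (?t n ?r) + tdist (Suc p) (B, dB, SB) (?t n' ?r') (?t m y)"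
      unfolding glue[symmetric] using triangle ten_elt_in_tcarrier_Suc less.prems(1,2) x(1) y(1)
        valid_enc.S_in[OF valid_enc_tensor_pow[OF sq]] cross(4) by blast
    also have "\<dots> \<le> l1_dist (cell_map n g) (cell_map n r) + l1_dist (cell_map n' r') (cell_map m h)"
      using tdist_Suc_same_cell[OF sq IH[OF less.prems(3) r(1)] less.prems(1,3) r(1)]
        less.hyps[OF cross(3,1) less.prems(2) r(2) less.prems(4)]
      by (intro add_mono) simp_all
    also have "\<dots> = l1_dist (cell_map n g) (cell_map m h)"
      using cross by simp
    finally show ?thesis .
  qed
qed

lemma tdist_le_l1_dist:
  assumes "square_ms B dB SB"
  shows "placed square_corners p (B, dB, SB) x g \<Longrightarrow> placed square_corners p (B, dB, SB) y h \<Longrightarrow>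
    tdist p (B, dB, SB) x y \<le> l1_dist g h"
proof (induction p arbitrary: x y g h)
  case 0
  then show ?case
    using dist_corners_le_l1_dist[OF assms] by (auto simp: tensor_pow_0 simp del: insert_iff)
next
  case (Suc p)
  obtain n x' g' where "n \<in> NN" "placed square_corners p (B, dB, SB) x' g'" "g = cell_map n g'"
    "x = ten_elt (tensor_pow p (B, dB, SB)) n x'"
    using Suc.prems(1) unfolding placed.simps by blast
  moreover obtain m y' h' where "m \<in> NN" "placed square_corners p (B, dB, SB) y' h'" "h = cell_map m h'"
    "y = ten_elt (tensor_pow p (B, dB, SB)) m y'"
    using Suc.prems(2) unfolding placed.simps by blast
  ultimately show ?case
    using tdist_Suc_le_l1_dist[OF assms Suc.IH] by blast
qed

lemma tdist_tens_elem:
  assumes "square_ms B dB SB" "set ns \<subseteq> NN" "set ns' \<subseteq> NN" "length ns' = length ns"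
    and "c \<in> square_corners" "c' \<in> square_corners"
  shows "tdist (length ns) (B, dB, SB) (tens_elem (B, dB, SB) ns (SB c)) (tens_elem (B, dB, SB) ns' (SB c'))
    = l1_dist (tens_point ns c) (tens_point ns' c')"
proof -
  have "placed square_corners (length ns) (B, dB, SB) (tens_elem (B, dB, SB) ns (SB c)) (tens_point ns c)"
    "placed square_corners (length ns) (B, dB, SB) (tens_elem (B, dB, SB) ns' (SB c')) (tens_point ns' c')"
    using tens_elem_placed assms by metis+
  then show ?thesis
    using tdist_le_l1_dist[OF assms(1)] l1_dist_le_tdist[OF assms(1)] placed_mono square_corners_subset_M0
    by (meson antisym)
qed

lemma tens_point_eq:
  "tens_point ns c =
    ((\<Sum>k<length ns. real (fst (ns ! k)) / 3 ^ (k + 1)) + fst c / 3 ^ length ns,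
     (\<Sum>k<length ns. real (snd (ns ! k)) / 3 ^ (k + 1)) + snd c / 3 ^ length ns)"
proof (induction ns)
  case (Cons n ns)
  have "(\<Sum>k<length (n # ns). f ((n # ns) ! k) / 3 ^ (k + 1)) =
      f n / 3 + (\<Sum>k<length ns. f (ns ! k) / 3 ^ (k + 1)) / 3" for f :: "nat \<times> nat \<Rightarrow> real"
    by (simp add: sum.lessThan_Suc_shift sum_divide_distrib del: sum.lessThan_Suc)
  from this[of "\<lambda>n. real (fst n)"] this[of "\<lambda>n. real (snd n)"] show ?case
    unfolding tens_point.simps Cons.IH cell_map_def by (simp add: field_simps)
qed simp

theorem mainTheorem13:
  fixes B :: "'b set" and dB :: "'b \<Rightarrow> 'b \<Rightarrow> real" and SB :: "real \<times> real \<Rightarrow> 'b"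
    and p :: nat and ns ns' :: "(nat \<times> nat) list" and r s t u :: real
  assumes "square_ms B dB SB"
    and "length ns = p" and "length ns' = p"
    and "set ns \<subseteq> NN" and "set ns' \<subseteq> NN"
    and "r \<in> {0, 1}" and "s \<in> {0, 1}" and "t \<in> {0, 1}" and "u \<in> {0, 1}"
  shows "(let pt = (\<lambda>ms a c.
                 ((\<Sum>k<p. real (fst (ms ! k)) / 3 ^ (k + 1)) + a / 3 ^ p,
                  (\<Sum>k<p. real (snd (ms ! k)) / 3 ^ (k + 1)) + c / 3 ^ p));
              h = 3 ^ p * \<bar>fst (pt ns r s) - fst (pt ns' t u)\<bar>;
              v = 3 ^ p * \<bar>snd (pt ns r s) - snd (pt ns' t u)\<bar>
          in tdist p (B, dB, SB) (tens_elem (B, dB, SB) ns (SB (r, s)))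
                                 (tens_elem (B, dB, SB) ns' (SB (t, u))) = (h + v) / 3 ^ p)
      \<and> tdist p (B, dB, SB) (tens_elem (B, dB, SB) ns (SB (0, 0)))
                            (tens_elem (B, dB, SB) ns' (SB (0, 0)))
          = \<bar>\<Sum>m<p. (real (fst (ns ! m)) - real (fst (ns' ! m))) / 3 ^ (m + 1)\<bar>
            + \<bar>\<Sum>m<p. (real (snd (ns ! m)) - real (snd (ns' ! m))) / 3 ^ (m + 1)\<bar>"
proof -
  let ?B = "(B, dB, SB)"
  let ?x = "\<lambda>ms. \<Sum>k<p. real (fst (ms ! k)) / 3 ^ (k + 1)"
  let ?y = "\<lambda>ms. \<Sum>k<p. real (snd (ms ! k)) / 3 ^ (k + 1)"
  have dist: "tdist p ?B (tens_elem ?B ns (SB c)) (tens_elem ?B ns' (SB c'))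
      = \<bar>(?x ns + fst c / 3 ^ p) - (?x ns' + fst c' / 3 ^ p)\<bar>
        + \<bar>(?y ns + snd c / 3 ^ p) - (?y ns' + snd c' / 3 ^ p)\<bar>"
    if "c \<in> square_corners" "c' \<in> square_corners" for c c'
    using tdist_tens_elem[OF assms(1,4,5) _ that] assms(2,3)
    by (simp add: tens_point_eq l1_dist_def)
  have "(r, s) \<in> square_corners" "(t, u) \<in> square_corners" "(0, 0) \<in> square_corners"
    using assms(6-9) by blast+
  note dists = dist[OF this(1,2)] dist[OF this(3,3)]
  have "?x ns - ?x ns' = (\<Sum>m<p. (real (fst (ns ! m)) - real (fst (ns' ! m))) / 3 ^ (m + 1))"
    "?y ns - ?y ns' = (\<Sum>m<p. (real (snd (ns ! m)) - real (snd (ns' ! m))) / 3 ^ (m + 1))"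
    by (simp_all add: diff_divide_distrib sum_subtractf)
  then show ?thesis
    unfolding Let_def dists by (simp add: distrib_left[symmetric])
qed

end
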